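(* Let $G$ be a graph on $\Pi$ and $A$ the simple closed-above model generated by $G$. Let $i\in[1,n]$. If the $i$-th covering numbers sequence $(s^i_j)_{j\ge1}$ of $G$ satisfies $s^i_j=n$ for some $j$, then $i$-set agreement is solvable on $A$ (in finitely many rounds).
   Context: Fix $\Pi=\{p_1,\dots,p_n\}$. A graph is a directed graph on $\Pi$ containing all self-loops; $Out_G(p)=\{q:(p,q)\in E(G)\}$, $In_G(p)=\{q:(q,p)\in E(G)\}$, $Out_G(P)=\bigcup_{p\in P}Out_G(p)$. Computation proceeds in failure-free, communication-closed rounds: in round $r$ a graph $G_r$ is chosen and each $p$ receives the round-$r$ messages of the processes in $In_{G_r}(p)$. $\uparrow G=\{H:E(H)\supseteq E(G)\}$; the simple closed-above model generated by $G$ allows exactly the executions whose round graphs all lie in $\uparrow G$. In $k$-set agreement each process starts with an input from a totally ordered set $V_{in}$ and must decide a value so that every decided value is some process's input and at most $k$ distinct values are decided; it is solvable on a model if some algorithm guarantees this, with all processes deciding after some fixed finite number of rounds, in every allowed execution and input assignment. $\mathrm{eqdom}(G)=\min\{i\in[1,n]:\forall P\subseteq\Pi,\ |P|=i\Rightarrow Out_G(P)=\Pi\}$ and $\mathrm{cov}_i(G)=\min_{P\subseteq\Pi,|P|=i}|Out_G(P)|$. The $i$-th covering numbers sequence of $G$ is defined by $s^i_1=\mathrm{cov}_i(G)$ and, for $k\ge1$, $s^i_{k+1}=n$ if $s^i_k\ge\mathrm{eqdom}(G)$, and $s^i_{k+1}=\mathrm{cov}_{s^i_k}(G)$ if $s^i_k<\mathrm{eqdom}(G)$.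 *)

theory Defs
  imports Main
begin

text \<open>Processes: the finite type 'p (so Pi = UNIV and n = card (UNIV::'p set)).
  A graph is a relation on 'p containing all self-loops.\<close>

definition is_graph :: "'p rel \<Rightarrow> bool" where
  "is_graph G \<longleftrightarrow> (\<forall>p. (p, p) \<in> G)"

definition Out :: "'p rel \<Rightarrow> 'p \<Rightarrow> 'p set" where
  "Out G p = {q. (p, q) \<in> G}"

definition In :: "'p rel \<Rightarrow> 'p \<Rightarrow> 'p set" where
  "In G p = {q. (q, p) \<in> G}"

definition OutSet :: "'p rel \<Rightarrow> 'p set \<Rightarrow> 'p set" where
  "OutSet G P = (\<Union>p\<in>P. Out G p)"

definition eqdom :: "('p::finite) rel \<Rightarrow> nat" where
  "eqdom G = (LEAST i. 1 \<le> i \<and> i \<le> card (UNIV::'p set) \<and>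
      (\<forall>P::'p set. card P = i \<longrightarrow> OutSet G P = UNIV))"

definition cov :: "('p::finite) rel \<Rightarrow> nat \<Rightarrow> nat" where
  "cov G i = Min {card (OutSet G P) | P::'p set. card P = i}"

text \<open>The i-th covering numbers sequence, indexed from 0:
  covseq G i k = s^i_(k+1).\<close>
fun covseq :: "('p::finite) rel \<Rightarrow> nat \<Rightarrow> nat \<Rightarrow> nat" where
  "covseq G i 0 = cov G i"
| "covseq G i (Suc k) =
     (if eqdom G \<le> covseq G i k then card (UNIV::'p set) else cov G (covseq G i k))"

text \<open>Up-closure: the round graphs allowed by the simple closed-above model
  generated by G.\<close>
definition up :: "'p rel \<Rightarrow> 'p rel set" where
  "up G = {H. is_graph H \<and> G \<subseteq> H}"

text \<open>Full-information local views. A deterministic algorithm in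
  failure-free communication-closed rounds is w.l.o.g. full-information:
  the local state after r rounds is a function of the local view.\<close>
datatype ('p, 'v) view =
    Init 'p 'v
  | Step "('p, 'v) view" "'p \<Rightarrow> ('p, 'v) view option"

text \<open>E r is the round graph of round r+1; x is the input assignment.\<close>
fun local_view :: "(nat \<Rightarrow> 'p rel) \<Rightarrow> ('p \<Rightarrow> 'v) \<Rightarrow> nat \<Rightarrow> 'p \<Rightarrow> ('p, 'v) view" where
  "local_view E x 0 p = Init p (x p)"
| "local_view E x (Suc r) p =
     Step (local_view E x r p)
          (\<lambda>q. if q \<in> In (E r) p then Some (local_view E x r q) else None)"

definition kset_solvable :: "'v set \<Rightarrow> nat \<Rightarrow> ('p::finite) rel \<Rightarrow> bool" where
  "kset_solvable Vin k G \<longleftrightarrow>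
     (\<exists>(R::nat) (\<delta> :: ('p, 'v) view \<Rightarrow> 'v).
        \<forall>(E :: nat \<Rightarrow> 'p rel) (x :: 'p \<Rightarrow> 'v).
          (\<forall>r. E r \<in> up G) \<longrightarrow> range x \<subseteq> Vin \<longrightarrow>
            (\<forall>p. \<delta> (local_view E x R p) \<in> range x) \<and>
            card (range (\<lambda>p. \<delta> (local_view E x R p))) \<le> k)"

end

theory Submission
  imports Defs
begin

text \<open>Every process floods the smallest input it has heard of and decides it after \<open>j + 1\<close>
  rounds, where \<open>s\<^sup>i\<^sub>j\<^sub>+\<^sub>1 = n\<close>. If \<open>v\<close> is the \<open>i\<close>-th smallest input, the set of processes whose
  current minimum is at most \<open>v\<close> contains at least \<open>i\<close> processes initially and, in every
  round, contains the out-neighbourhood in \<open>G\<close> of its previous value. By definition of the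
  covering numbers its size after \<open>k + 1\<close> rounds is at least \<open>s\<^sup>i\<^sub>k\<^sub>+\<^sub>1\<close>, so in the end every
  process decides one of the \<open>i\<close> values not exceeding \<open>v\<close>.\<close>

text \<open>The recursive call is written through \<open>map_option\<close> because \<open>primrec\<close> only accepts
  nested recursion through the map function of the nesting type.\<close>

primrec known :: "('p, 'v) view \<Rightarrow> 'v set" where
  "known (Init p v) = {v}"
| "known (Step w f) = known w \<union> (\<Union>q. case map_option known (f q) of None \<Rightarrow> {} | Some s \<Rightarrow> s)"

definition flood_min :: "('p, 'v::linorder) view \<Rightarrow> 'v" where
  "flood_min w = Min (known w)"

lemma known_local_view_subset_range: "known (local_view E x r p) \<subseteq> range x"
proof (induction r arbitrary: p)
  case (Suc r)
  then show ?case by (fastforce split: if_splits)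
qed simp

lemma input_in_known_local_view: "x p \<in> known (local_view E x r p)"
  by (induction r) auto

lemma known_local_view_nonempty: "known (local_view E x r p) \<noteq> {}"
  using input_in_known_local_view[of x p E r] by blast

lemma known_local_view_mono:
  assumes "q \<in> In (E r) p"
  shows "known (local_view E x r q) \<subseteq> known (local_view E x (Suc r) p)"
  using assms by auto

lemma finite_known_local_view:
  "finite (range x) \<Longrightarrow> finite (known (local_view E x r p))"
  by (rule finite_subset[OF known_local_view_subset_range])

lemma flood_min_local_view_in_range:
  fixes x :: "'p \<Rightarrow> 'v::linorder"
  assumes "finite (range x)"
  shows "flood_min (local_view E x r p) \<in> range x"
  using Min_in[OF finite_known_local_view[OF assms] known_local_view_nonempty]
    known_local_view_subset_range[of E x r p]
  unfolding flood_min_def by blast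

lemma flood_min_local_view_antimono:
  fixes x :: "'p \<Rightarrow> 'v::linorder"
  assumes "finite (range x)" and "q \<in> In (E r) p"
  shows "flood_min (local_view E x (Suc r) p) \<le> flood_min (local_view E x r q)"
  unfolding flood_min_def
proof (rule Min_antimono)
  show "known (local_view E x r q) \<subseteq> known (local_view E x (Suc r) p)"
    using assms(2) by (rule known_local_view_mono)
  show "known (local_view E x r q) \<noteq> {}"
    by (rule known_local_view_nonempty)
  show "finite (known (local_view E x (Suc r) p))"
    by (rule finite_known_local_view[OF assms(1)])
qed

lemma OutSet_mono: "P \<subseteq> Q \<Longrightarrow> OutSet G P \<subseteq> OutSet G Q"
  by (auto simp: OutSet_def)

lemma OutSet_eq_UNIV_if_card_eqdom:
  fixes G :: "('p::finite) rel"
  assumes "is_graph G" and "card P = eqdom G"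
  shows "OutSet G P = UNIV"
proof -
  have "OutSet G Q = UNIV" if "card Q = card (UNIV::'p set)" for Q :: "'p set"
  proof -
    have "Q = UNIV" using that by (intro card_subset_eq) simp_all
    then show ?thesis using assms(1) by (auto simp: OutSet_def Out_def is_graph_def)
  qed
  moreover have "1 \<le> card (UNIV::'p set)"
    using finite_UNIV_card_ge_0[OF finite_UNIV] by (simp add: Suc_le_eq)
  ultimately have "1 \<le> card (UNIV::'p set) \<and> card (UNIV::'p set) \<le> card (UNIV::'p set) \<and>
      (\<forall>P::'p set. card P = card (UNIV::'p set) \<longrightarrow> OutSet G P = UNIV)"
    by blast
  then have "1 \<le> eqdom G \<and> eqdom G \<le> card (UNIV::'p set) \<and>
      (\<forall>P::'p set. card P = eqdom G \<longrightarrow> OutSet G P = UNIV)"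
    unfolding eqdom_def by (rule LeastI)
  then show ?thesis using assms(2) by blast
qed

lemma cov_le_card_OutSet:
  fixes G :: "('p::finite) rel"
  assumes "m \<le> card S"
  shows "cov G m \<le> card (OutSet G S)"
proof -
  obtain P where P: "P \<subseteq> S" "card P = m"
    using assms by (meson finite obtain_subset_with_card_n)
  have "finite {card (OutSet G P) | P::'p set. card P = m}"
    by (rule finite_subset[of _ "(\<lambda>P. card (OutSet G P)) ` UNIV"]) auto
  then have "cov G m \<le> card (OutSet G P)"
    unfolding cov_def using P(2) by (intro Min_le) auto
  also have "\<dots> \<le> card (OutSet G S)"
    using P(1) by (intro card_mono OutSet_mono) simp_all
  finally show ?thesis .
qed

lemma covseq_le_card_of_expanding:
  fixes G :: "('p::finite) rel" and S :: "nat \<Rightarrow> 'p set"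
  assumes "is_graph G" and "i \<le> card (S 0)"
    and expand: "\<And>k. OutSet G (S k) \<subseteq> S (Suc k)"
  shows "covseq G i k \<le> card (S (Suc k))"
proof (induction k)
  case 0
  have "cov G i \<le> card (OutSet G (S 0))" by (rule cov_le_card_OutSet[OF assms(2)])
  also have "\<dots> \<le> card (S (Suc 0))" by (intro card_mono expand) simp
  finally show ?case by simp
next
  case (Suc k)
  show ?case
  proof (cases "eqdom G \<le> covseq G i k")
    case True
    then obtain P where P: "P \<subseteq> S (Suc k)" "card P = eqdom G"
      using Suc by (meson finite obtain_subset_with_card_n le_trans)
    have "UNIV = OutSet G P" using OutSet_eq_UNIV_if_card_eqdom[OF assms(1) P(2)] by simp
    also have "\<dots> \<subseteq> S (Suc (Suc k))" using OutSet_mono[OF P(1)] expand by blast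
    finally have "S (Suc (Suc k)) = UNIV" by blast
    then show ?thesis using True by simp
  next
    case False
    have "cov G (covseq G i k) \<le> card (OutSet G (S (Suc k)))"
      by (rule cov_le_card_OutSet[OF Suc])
    also have "\<dots> \<le> card (S (Suc (Suc k)))" by (intro card_mono expand) simp
    finally show ?thesis using False by simp
  qed
qed

lemma ex_card_atMost_in_eq:
  fixes V :: "'v::linorder set"
  assumes "finite V" and "1 \<le> i" and "i \<le> card V"
  shows "\<exists>v\<in>V. card {u\<in>V. u \<le> v} = i"
  using assms
proof (induction V rule: finite_linorder_max_induct)
  case empty
  then show ?case by simp
next
  case (insert b A)
  show ?case
  proof (cases "i = card (insert b A)")
    case True
    have "{u\<in>insert b A. u \<le> b} = insert b A" using insert by auto
    then show ?thesis using True by auto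
  next
    case False
    then have "i \<le> card A" using insert by auto
    then obtain v where v: "v \<in> A" "card {u\<in>A. u \<le> v} = i" using insert by auto
    have "{u\<in>insert b A. u \<le> v} = {u\<in>A. u \<le> v}" using insert v by auto
    then have "card {u\<in>insert b A. u \<le> v} = i" using v(2) by simp
    then show ?thesis using v(1) by blast
  qed
qed

lemma expanding_flood_min_le:
  fixes G :: "'p rel" and x :: "'p \<Rightarrow> 'v::linorder"
  assumes "finite (range x)" and "E k \<in> up G"
  shows "OutSet G {p. flood_min (local_view E x k p) \<le> v}
           \<subseteq> {p. flood_min (local_view E x (Suc k) p) \<le> v}"
proof
  fix p assume "p \<in> OutSet G {p. flood_min (local_view E x k p) \<le> v}"
  then obtain q where q: "flood_min (local_view E x k q) \<le> v" "(q, p) \<in> G"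
    by (auto simp: OutSet_def Out_def)
  then have "q \<in> In (E k) p" using assms(2) by (auto simp: up_def In_def)
  then show "p \<in> {p. flood_min (local_view E x (Suc k) p) \<le> v}"
    using flood_min_local_view_antimono[OF assms(1)] q(1) by (fastforce intro: order_trans)
qed

lemma card_flood_min_decisions_le:
  fixes G :: "('p::finite) rel" and x :: "'p \<Rightarrow> 'v::linorder"
  assumes "is_graph G" and "1 \<le> i" and "covseq G i j = card (UNIV::'p set)"
    and "\<forall>r. E r \<in> up G"
  shows "card (range (\<lambda>p. flood_min (local_view E x (Suc j) p))) \<le> i"
proof -
  let ?decisions = "range (\<lambda>p. flood_min (local_view E x (Suc j) p))"
  have fin: "finite (range x)" by simp
  have decisions_inputs: "?decisions \<subseteq> range x"
    using flood_min_local_view_in_range[OF fin, of E "Suc j"] by blast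
  show ?thesis
  proof (cases "card (range x) \<le> i")
    case True
    then show ?thesis using card_mono[OF fin decisions_inputs] by simp
  next
    case False
    then obtain v where v: "card {u\<in>range x. u \<le> v} = i"
      using ex_card_atMost_in_eq[OF fin assms(2)] by auto
    define S where "S k = {p. flood_min (local_view E x k p) \<le> v}" for k
    have "x ` S 0 = {u\<in>range x. u \<le> v}" by (auto simp: S_def flood_min_def)
    then have "i \<le> card (S 0)" using v card_image_le[of "S 0" x] by simp
    moreover have "OutSet G (S k) \<subseteq> S (Suc k)" for k
      unfolding S_def by (rule expanding_flood_min_le[OF fin assms(4)[rule_format]])
    ultimately have "covseq G i j \<le> card (S (Suc j))"
      by (rule covseq_le_card_of_expanding[OF assms(1)])
    then have "S (Suc j) = UNIV" using assms(3) by (intro card_seteq) auto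
    then have "?decisions \<subseteq> {u\<in>range x. u \<le> v}" using decisions_inputs by (auto simp: S_def)
    then show ?thesis using v card_mono[of "{u\<in>range x. u \<le> v}"] by simp
  qed
qed

theorem theorem9:
  fixes G :: "('p::finite) rel" and Vin :: "('v::linorder) set" and i :: nat
  assumes "is_graph G"
    and "1 \<le> i" and "i \<le> card (UNIV::'p set)"
    and "\<exists>j. covseq G i j = card (UNIV::'p set)"
  shows "kset_solvable Vin i G"
proof -
  obtain j where j: "covseq G i j = card (UNIV::'p set)" using assms(4) by blast
  have "(\<forall>p. flood_min (local_view E x (Suc j) p) \<in> range x) \<and>
        card (range (\<lambda>p. flood_min (local_view E x (Suc j) p))) \<le> i"
    if "\<forall>r. E r \<in> up G" for E :: "nat \<Rightarrow> 'p rel" and x :: "'p \<Rightarrow> 'v"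
  proof
    have "finite (range x)" by simp
    then show "\<forall>p. flood_min (local_view E x (Suc j) p) \<in> range x"
      by (intro allI flood_min_local_view_in_range)
    show "card (range (\<lambda>p. flood_min (local_view E x (Suc j) p))) \<le> i"
      by (rule card_flood_min_decisions_le[OF assms(1,2) j that])
  qed
  then show ?thesis unfolding kset_solvable_def by blast
qed

end
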